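(* Let $m,n$ be positive integers. The simplicial rook graph $\mathcal{SR}(m,n)$ is Hamiltonian, except in the cases $m=1$ and $(m,n)=(2,1)$.
   Context: For positive integers $m,n$, the simplicial rook graph $\mathcal{SR}(m,n)$ is the graph whose vertices are the vectors $(a_1,\dots,a_m)\in\mathbb{N}^m$ (nonnegative integer coordinates) with $a_1+\cdots+a_m=n$, two vertices being adjacent if and only if their vectors differ in exactly two coordinates. A graph is Hamiltonian if it has a cycle passing through every vertex exactly once. *)

theory Defs
  imports Main
begin

definition hamiltonian :: "'a set \<Rightarrow> ('a \<Rightarrow> 'a \<Rightarrow> bool) \<Rightarrow> bool" where
  "hamiltonian V E \<longleftrightarrow>
     (\<exists>cs. length cs \<ge> 3 \<and> distinct cs \<and> set cs = V \<and>
        (\<forall>i < length cs. E (cs ! i) (cs ! ((i + 1) mod length cs))))"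

definition SR_vertices :: "nat \<Rightarrow> nat \<Rightarrow> nat list set" where
  "SR_vertices m n = {a. length a = m \<and> sum_list a = n}"

definition SR_adj :: "nat list \<Rightarrow> nat list \<Rightarrow> bool" where
  "SR_adj a b \<longleftrightarrow> card {i. i < length a \<and> a ! i \<noteq> b ! i} = 2"

end

theory Submission
  imports Defs
begin

text \<open>
  The vertices of SR(m + 1, n) whose last coordinate is k form a copy of SR(m, n - k).
  Concatenating Hamiltonian paths of these layers for k = 0, ..., n, reversing every other one,
  yields a Hamiltonian path of SR(m + 1, n) from n e_1 to n e_(m+1): consecutive layers are joined
  by moving one unit into the last coordinate, alternately from the m-th and from the first
  coordinate. The endpoints n e_1 and n e_(m+1) differ in exactly two coordinates, so the path
  closes to a Hamiltonian cycle whenever there are at least three vertices; this fails only for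
  m = 1 and (m, n) = (2, 1), where there are one resp. two vertices.
\<close>

lemma successively_concat_map_upt:
  assumes "\<And>k. k \<le> n \<Longrightarrow> successively R (f k)"
    and "\<And>k. k \<le> n \<Longrightarrow> f k \<noteq> []"
    and "\<And>k. k < n \<Longrightarrow> R (last (f k)) (hd (f (Suc k)))"
  shows "successively R (concat (map f [0..<Suc n]))"
  using assms
proof (induction n)
  case (Suc n)
  then have "successively R (concat (map f [0..<Suc n]))"
    by simp
  moreover have "last (concat (map f [0..<Suc n])) = last (f n)"
    using Suc.prems(2)[of n] by simp
  ultimately show ?case
    using Suc.prems by (simp add: successively_append_iff)
qed simp

lemma distinct_concat_map:
  assumes "distinct ks" "\<And>k. k \<in> set ks \<Longrightarrow> distinct (f k)"
    and "\<And>k j. k \<in> set ks \<Longrightarrow> j \<in> set ks \<Longrightarrow> k \<noteq> j \<Longrightarrow> set (f k) \<inter> set (f j) = {}"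
  shows "distinct (concat (map f ks))"
  using assms
proof (induction ks)
  case (Cons k ks)
  have "set (f k) \<inter> set (f j) = {}" if "j \<in> set ks" for j
    using Cons.prems that by (metis distinct.simps(2) list.set_intros)
  then have "set (f k) \<inter> (\<Union>j\<in>set ks. set (f j)) = {}"
    by blast
  with Cons show ?case
    by simp
qed simp

lemma hamiltonianI_closed_path:
  assumes "3 \<le> length cs" "distinct cs" "set cs = V"
    and "successively E cs" "E (last cs) (hd cs)"
  shows "hamiltonian V E"
  unfolding hamiltonian_def
proof (intro exI conjI allI impI)
  fix i
  assume i: "i < length cs"
  show "E (cs ! i) (cs ! ((i + 1) mod length cs))"
  proof (cases "Suc i < length cs")
    case True
    then show ?thesis
      using assms(4) successively_nth by simp
  next
    case False
    then have "Suc i = length cs"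
      using i by simp
    then have "i = length cs - 1" "(i + 1) mod length cs = 0"
      by simp_all
    moreover have "cs \<noteq> []"
      using assms(1) by auto
    ultimately show ?thesis
      using assms(5) by (simp add: last_conv_nth hd_conv_nth)
  qed
qed (use assms in auto)

lemma hamiltonian_card_ge_3: "hamiltonian V E \<Longrightarrow> 3 \<le> card V"
  unfolding hamiltonian_def by (metis distinct_card)

lemma SR_adj_commute:
  assumes "length a = length b"
  shows "SR_adj a b \<longleftrightarrow> SR_adj b a"
proof -
  have "{i. i < length a \<and> a ! i \<noteq> b ! i} = {i. i < length b \<and> b ! i \<noteq> a ! i}"
    using assms by auto
  then show ?thesis
    by (simp add: SR_adj_def)
qed

lemma SR_adj_append_same:
  assumes "length x = length y"
  shows "SR_adj (x @ [k]) (y @ [k]) \<longleftrightarrow> SR_adj x y"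
proof -
  have "{i. i < length (x @ [k]) \<and> (x @ [k]) ! i \<noteq> (y @ [k]) ! i} =
      {i. i < length x \<and> x ! i \<noteq> y ! i}"
    using assms by (auto simp: nth_append less_Suc_eq)
  then show ?thesis
    unfolding SR_adj_def by simp
qed

lemma SR_adj_update2:
  assumes "i \<noteq> j" "i < length a" "j < length a" "x \<noteq> a ! i" "y \<noteq> a ! j"
  shows "SR_adj a (a[i := x, j := y])"
proof -
  have "{k. k < length a \<and> a ! k \<noteq> a[i := x, j := y] ! k} = {i, j}"
    using assms by (auto simp: nth_list_update)
  then show ?thesis
    using assms(1) by (simp add: SR_adj_def)
qed

lemma SR_vertices_one: "SR_vertices 1 n = {[n]}"
  by (auto simp: SR_vertices_def length_Suc_conv)

lemma SR_vertices_two_one: "SR_vertices 2 1 = {[1, 0], [0, 1]}"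
proof -
  have "v = [1, 0] \<or> v = [0, 1]" if "length v = 2" "sum_list v = 1" for v :: "nat list"
  proof -
    obtain a b where "v = [a, b]"
      using \<open>length v = 2\<close> by (auto simp: numeral_2_eq_2 length_Suc_conv)
    then show ?thesis
      using \<open>sum_list v = 1\<close> by auto
  qed
  then show ?thesis
    by (auto simp: SR_vertices_def)
qed

lemma SR_vertices_Suc:
  "SR_vertices (Suc m) n = (\<Union>k\<in>{0..<Suc n}. (\<lambda>x. x @ [k]) ` SR_vertices m (n - k))"
proof (intro set_eqI iffI)
  fix v
  assume v: "v \<in> SR_vertices (Suc m) n"
  then have "v \<noteq> []"
    by (auto simp: SR_vertices_def)
  then have split: "v = butlast v @ [last v]"
    by simp
  then have "sum_list v = sum_list (butlast v) + last v"
    by (metis sum_list_append sum_list.Cons sum_list.Nil add_0_right)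
  then have "last v \<le> n" "butlast v \<in> SR_vertices m (n - last v)"
    using v by (auto simp: SR_vertices_def)
  then show "v \<in> (\<Union>k\<in>{0..<Suc n}. (\<lambda>x. x @ [k]) ` SR_vertices m (n - k))"
    using split by (auto intro!: bexI[of _ "last v"])
qed (auto simp: SR_vertices_def)

lemma finite_SR_vertices: "finite (SR_vertices m n)"
proof (rule finite_subset)
  show "SR_vertices m n \<subseteq> {xs. set xs \<subseteq> {0..n} \<and> length xs = m}"
  proof
    fix xs
    assume "xs \<in> SR_vertices m n"
    then show "xs \<in> {xs. set xs \<subseteq> {0..n} \<and> length xs = m}"
      by (auto simp: SR_vertices_def dest: member_le_sum_list)
  qed
  show "finite {xs. set xs \<subseteq> {0..n} \<and> length xs = m}"
    by (rule finite_lists_length_eq) simp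
qed

lemma card_SR_vertices_ge_3:
  assumes "2 \<le> m" "1 \<le> n" "\<not> (m = 2 \<and> n = 1)"
  shows "3 \<le> card (SR_vertices m n)"
proof -
  obtain a b c where abc: "{a, b, c} \<subseteq> SR_vertices m n" "a \<noteq> b" "a \<noteq> c" "b \<noteq> c"
  proof (cases "m = 2")
    case True
    with assms have "{[n, 0], [0, n], [1, n - 1]} \<subseteq> SR_vertices m n" "2 \<le> n"
      by (auto simp: SR_vertices_def)
    then show ?thesis
      using that[of "[n, 0]" "[0, n]" "[1, n - 1]"] by auto
  next
    case False
    with assms have "3 \<le> m"
      by simp
    then obtain j where m: "m = j + 3"
      using le_Suc_ex by (metis add.commute)
    let ?a = "n # replicate (j + 2) 0" and ?b = "replicate (j + 2) 0 @ [n]"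
      and ?c = "0 # n # replicate (j + 1) 0"
    have "{?a, ?b, ?c} \<subseteq> SR_vertices m n"
      by (simp add: m SR_vertices_def)
    moreover have "?a \<noteq> ?b" "?a \<noteq> ?c" "?b \<noteq> ?c"
      using assms(2) by (simp_all add: nth_equalityI)
    ultimately show ?thesis
      by (rule that)
  qed
  then have "card {a, b, c} \<le> card (SR_vertices m n)"
    by (intro card_mono finite_SR_vertices)
  with abc show ?thesis
    by simp
qed

definition layer :: "nat list list \<Rightarrow> nat \<Rightarrow> nat list list" where
  "layer xs k = map (\<lambda>x. x @ [k]) (if even k then xs else rev xs)"

fun snake :: "nat \<Rightarrow> nat \<Rightarrow> nat list list" where
  "snake 0 n = [[n]]"
| "snake (Suc m) n = concat (map (\<lambda>k. layer (snake m (n - k)) k) [0..<Suc n])"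

lemma set_layer: "set (layer xs k) = (\<lambda>x. x @ [k]) ` set xs"
  by (simp add: layer_def)

lemma distinct_layer: "distinct xs \<Longrightarrow> distinct (layer xs k)"
  by (auto simp: layer_def distinct_map inj_on_def)

lemma layer_eq_Nil_iff [simp]: "layer xs k = [] \<longleftrightarrow> xs = []"
  by (simp add: layer_def)

lemma hd_layer: "xs \<noteq> [] \<Longrightarrow> hd (layer xs k) = (if even k then hd xs else last xs) @ [k]"
  by (simp add: layer_def hd_map hd_rev)

lemma last_layer: "xs \<noteq> [] \<Longrightarrow> last (layer xs k) = (if even k then last xs else hd xs) @ [k]"
  by (simp add: layer_def last_map last_rev)

lemma successively_layer:
  assumes "successively SR_adj xs" "\<And>x. x \<in> set xs \<Longrightarrow> length x = l"
  shows "successively SR_adj (layer xs k)"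
proof -
  have "successively (\<lambda>x y. SR_adj (x @ [k]) (y @ [k])) xs"
    using assms by (auto intro: successively_mono simp: SR_adj_append_same)
  moreover have "successively (\<lambda>x y. SR_adj (y @ [k]) (x @ [k])) xs"
    using assms by (auto intro: successively_mono simp: SR_adj_append_same SR_adj_commute)
  ultimately show ?thesis
    by (simp add: layer_def successively_map)
qed

lemma snake_neq_Nil [simp]: "snake m n \<noteq> []"
  by (induction m arbitrary: n) auto

lemma set_snake: "set (snake m n) = SR_vertices (Suc m) n"
proof (induction m arbitrary: n)
  case 0
  show ?case
    using SR_vertices_one by simp
next
  case (Suc m)
  show ?case
    by (simp add: Suc.IH set_layer SR_vertices_Suc[of "Suc m"] del: upt_Suc)
qed

lemma distinct_snake: "distinct (snake m n)"
proof (induction m arbitrary: n)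
  case (Suc m)
  show ?case
    unfolding snake.simps
    by (rule distinct_concat_map) (auto simp: Suc.IH distinct_layer set_layer)
qed simp

lemma hd_snake: "hd (snake m n) = n # replicate m 0"
proof (induction m arbitrary: n)
  case (Suc m)
  have "[0..<Suc n] = 0 # [1..<Suc n]"
    by (simp add: upt_conv_Cons)
  then show ?case
    by (simp add: hd_layer Suc.IH replicate_append_same)
qed simp

lemma last_snake: "last (snake m n) = replicate m 0 @ [n]"
proof (induction m arbitrary: n)
  case (Suc m)
  have "hd (snake m 0) = replicate (Suc m) 0"
    by (simp add: hd_snake)
  then show ?case
    by (simp add: last_layer Suc.IH replicate_append_same)
qed simp

lemma successively_snake: "successively SR_adj (snake m n)"
proof (induction m arbitrary: n)
  case (Suc m)
  define f where "f = (\<lambda>k. layer (snake m (n - k)) k)"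
  have snake_eq: "snake (Suc m) n = concat (map f [0..<Suc n])"
    by (simp add: f_def)
  have step: "SR_adj (last (f k)) (hd (f (Suc k)))" if "k < n" for k
  proof (cases "even k")
    case True
    have last: "last (f k) = (replicate m 0 @ [n - k]) @ [k]"
      using True by (simp add: f_def last_layer last_snake)
    have "hd (f (Suc k)) = (replicate m 0 @ [n - k - 1]) @ [Suc k]"
      using True by (simp add: f_def hd_layer last_snake)
    also have "\<dots> = (last (f k))[m := n - k - 1, Suc m := Suc k]"
      by (simp add: last list_update_append)
    finally have hd: "hd (f (Suc k)) = \<dots>" .
    show ?thesis
      unfolding hd by (rule SR_adj_update2) (use that in \<open>simp_all add: last nth_append\<close>)
  next
    case False
    have last: "last (f k) = ((n - k) # replicate m 0) @ [k]"
      using False by (simp add: f_def last_layer hd_snake)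
    have "hd (f (Suc k)) = ((n - k - 1) # replicate m 0) @ [Suc k]"
      using False by (simp add: f_def hd_layer hd_snake)
    also have "\<dots> = (last (f k))[0 := n - k - 1, Suc m := Suc k]"
      by (simp add: last list_update_append)
    finally have hd: "hd (f (Suc k)) = \<dots>" .
    show ?thesis
      unfolding hd by (rule SR_adj_update2) (use that in \<open>simp_all add: last nth_append\<close>)
  qed
  have "successively SR_adj (f k)" for k
    unfolding f_def using Suc.IH set_snake
    by (intro successively_layer[where l = "Suc m"]) (auto simp: SR_vertices_def)
  moreover have "f k \<noteq> []" for k
    by (simp add: f_def)
  ultimately show ?case
    unfolding snake_eq using step by (rule successively_concat_map_upt)
qed simp

lemma SR_adj_last_hd_snake:
  assumes "1 \<le> m" "1 \<le> n"
  shows "SR_adj (last (snake m n)) (hd (snake m n))"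
proof -
  obtain k where m: "m = Suc k"
    using assms(1) by (cases m) auto
  have hd: "hd (snake m n) = (last (snake m n))[0 := n, m := 0]"
    unfolding hd_snake last_snake by (simp add: m list_update_append replicate_append_same)
  show ?thesis
    unfolding hd by (rule SR_adj_update2) (use assms in \<open>simp_all add: last_snake nth_append\<close>)
qed

lemma hamiltonian_SR:
  assumes "2 \<le> m" "1 \<le> n" "\<not> (m = 2 \<and> n = 1)"
  shows "hamiltonian (SR_vertices m n) SR_adj"
proof -
  from assms(1) obtain j where m: "m = Suc (Suc j)"
    by (metis add_2_eq_Suc le_Suc_ex)
  have set_eq: "set (snake (Suc j) n) = SR_vertices m n"
    unfolding m by (rule set_snake)
  show ?thesis
  proof (rule hamiltonianI_closed_path[OF _ distinct_snake set_eq successively_snake])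
    have "length (snake (Suc j) n) = card (SR_vertices m n)"
      unfolding set_eq[symmetric] by (rule distinct_card[OF distinct_snake, symmetric])
    then show "3 \<le> length (snake (Suc j) n)"
      using assms card_SR_vertices_ge_3 by simp
    show "SR_adj (last (snake (Suc j) n)) (hd (snake (Suc j) n))"
      using assms(2) by (intro SR_adj_last_hd_snake) simp_all
  qed
qed

theorem theorem3:
  fixes m n :: nat
  assumes "m \<ge> 1" and "n \<ge> 1"
  shows "hamiltonian (SR_vertices m n) SR_adj \<longleftrightarrow> \<not> (m = 1 \<or> (m = 2 \<and> n = 1))"
proof
  assume "hamiltonian (SR_vertices m n) SR_adj"
  then have "3 \<le> card (SR_vertices m n)"
    by (rule hamiltonian_card_ge_3)
  moreover have "card (SR_vertices m n) < 3" if "m = 1 \<or> (m = 2 \<and> n = 1)"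
    using that SR_vertices_one SR_vertices_two_one by auto
  ultimately show "\<not> (m = 1 \<or> (m = 2 \<and> n = 1))"
    by linarith
next
  assume "\<not> (m = 1 \<or> (m = 2 \<and> n = 1))"
  with assms show "hamiltonian (SR_vertices m n) SR_adj"
    by (intro hamiltonian_SR) auto
qed

end
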